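(* The Steiner circumellipse $\mathcal{E}'$ of $T'=P_1'P_2'P_3'$ is centered at $C_2=\left(-\frac{a^2+b^2}{2a}\cos u,-\frac{a^2+b^2}{2b}\sin u\right)$, has axes parallel to the coordinate axes, with semi-axis $\frac{3c^2}{2a}$ in the $x$-direction and $\frac{3c^2}{2b}$ in the $y$-direction. Hence $\mathcal{E}'$ is similar to the copy of $\mathcal{E}$ rotated by $90^\circ$ about $O$, its area $\frac{9\pi c^4}{4ab}$ is independent of $u$, the ratio of the areas of $\mathcal{E}'$ and $\mathcal{E}$ is $\frac{9c^4}{4a^2b^2}$, and $\mathcal{E}'$ is congruent to $\mathcal{E}$ exactly when $a/b=(1+\sqrt{10})/3$.
   Context: Let $a>b>0$ and $c>0$ with $c^2=a^2-b^2$. Let $\mathcal{E}$ be the ellipse $x^2/a^2+y^2/b^2=1$ with center $O=(0,0)$. Fix $u\in\mathbb{R}$. Let $\Delta_u(t)=(x_u(t),y_u(t))$, where $x_u(t)=\frac1a\big(c^2(1+\cos(t+u))\cos t-a^2\cos u\big)$ and $y_u(t)=\frac1b\big(c^2\cos t\sin(t+u)-c^2\sin t-a^2\sin u\big)$ (the negative pedal curve of $\mathcal{E}$ with respect to $M=(a\cos u,b\sin u)$). For $i=1,2,3$ let $t_i=-u/3-2\pi(i-1)/3$ and $P_i'=\Delta_u(t_i)$ (the cusps). The Steiner circumellipse of a triangle is the unique ellipse through its three vertices centered at its centroid. *)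

theory Defs
  imports "HOL-Analysis.Analysis"
begin

text \<open>Negative pedal curve of the ellipse x^2/a^2+y^2/b^2=1 w.r.t. M=(a cos u, b sin u).\<close>
definition neg_pedal :: "real \<Rightarrow> real \<Rightarrow> real \<Rightarrow> real \<Rightarrow> real \<Rightarrow> real \<times> real" where
  "neg_pedal a b c u t =
     ((c^2 * (1 + cos (t + u)) * cos t - a^2 * cos u) / a,
      (c^2 * cos t * sin (t + u) - c^2 * sin t - a^2 * sin u) / b)"

definition cusp :: "real \<Rightarrow> real \<Rightarrow> real \<Rightarrow> real \<Rightarrow> nat \<Rightarrow> real \<times> real" where
  "cusp a b c u i = neg_pedal a b c u (- u / 3 - 2 * pi * (real i - 1) / 3)"

definition axis_ellipse :: "real \<times> real \<Rightarrow> real \<Rightarrow> real \<Rightarrow> (real \<times> real) set" where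
  "axis_ellipse z A B = {p. ((fst p - fst z) / A)^2 + ((snd p - snd z) / B)^2 = 1}"

definition axis_ellipse_region :: "real \<times> real \<Rightarrow> real \<Rightarrow> real \<Rightarrow> (real \<times> real) set" where
  "axis_ellipse_region z A B = {p. ((fst p - fst z) / A)^2 + ((snd p - snd z) / B)^2 \<le> 1}"

definition ellipse_centered_at :: "(real \<times> real) set \<Rightarrow> real \<times> real \<Rightarrow> bool" where
  "ellipse_centered_at S z \<longleftrightarrow>
     (\<exists>A B C. A > 0 \<and> A * C - B^2 > 0 \<and>
        S = {p. A * (fst p - fst z)^2 + 2 * B * (fst p - fst z) * (snd p - snd z)
                + C * (snd p - snd z)^2 = 1})"

definition centroid3 :: "real \<times> real \<Rightarrow> real \<times> real \<Rightarrow> real \<times> real \<Rightarrow> real \<times> real" where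
  "centroid3 P1 P2 P3 = (1/3) *\<^sub>R (P1 + P2 + P3)"

definition steiner_circumellipse ::
    "real \<times> real \<Rightarrow> real \<times> real \<Rightarrow> real \<times> real \<Rightarrow> (real \<times> real) set \<Rightarrow> bool" where
  "steiner_circumellipse P1 P2 P3 S \<longleftrightarrow>
     ellipse_centered_at S (centroid3 P1 P2 P3) \<and> P1 \<in> S \<and> P2 \<in> S \<and> P3 \<in> S"

definition center_C2 :: "real \<Rightarrow> real \<Rightarrow> real \<Rightarrow> real \<times> real" where
  "center_C2 a b u = (- (a^2 + b^2) / (2 * a) * cos u, - (a^2 + b^2) / (2 * b) * sin u)"

definition rot90 :: "real \<times> real \<Rightarrow> real \<times> real" where
  "rot90 p = (- snd p, fst p)"

end

theory Submission
  imports Defs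
begin

text \<open>At a cusp parameter, i.e.\ when \<open>3t \<equiv> -u (mod 2\<pi>)\<close>, the triple-angle formulas
  collapse the negative pedal point to \<open>C\<^sub>2 + (3c\<^sup>2/(2a) cos t, -3c\<^sup>2/(2b) sin t)\<close>.
  So the cusps are the images of three equally spaced points of the unit circle under an
  axis-parallel affine map sending \<open>0\<close> to \<open>C\<^sub>2\<close>, and the Steiner circumellipse is the image of
  the unit circle. It is the only one, because a conic centred at \<open>0\<close> through three equally
  spaced points of the unit circle is that circle: its coefficients solve a linear system in
  \<open>1, cos 2t, sin 2t\<close>, and the cosines and sines of equally spaced angles sum to zero.
  The ellipse found is the given one turned by a right angle and scaled by \<open>3c\<^sup>2/(2ab)\<close>.
  An isometry preserves the largest distance between two points of an ellipse, twice its major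
  semi-axis, so congruence forces the scale \<open>1\<close>, i.e.\ \<open>3(a\<^sup>2 - b\<^sup>2) = 2ab\<close>.\<close>

lemma measure_axis_ellipse_region:
  fixes A B :: real
  assumes "A > 0" "B > 0"
  shows "measure lborel (axis_ellipse_region z A B) = pi * A * B"
proof -
  define scale :: "real \<times> real \<Rightarrow> real" where "scale j = (if j = (1, 0) then A else B)" for j
  define T where "T x = z + (\<Sum>j\<in>Basis. (scale j * (x \<bullet> j)) *\<^sub>R j)" for x :: "real \<times> real"
  have T: "T x = (fst z + A * fst x, snd z + B * snd x)" for x
    by (simp add: T_def Basis_prod_def scale_def inner_prod_def prod_eq_iff)
  have "\<And>j. j \<in> Basis \<Longrightarrow> scale j \<noteq> 0"
    using assms by (auto simp: scale_def)
  then have lborel_T: "lborel = density (distr lborel borel T) (\<lambda>_. \<Prod>j\<in>Basis. \<bar>scale j\<bar>)"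
    unfolding T_def by (rule lborel_affine_euclidean)
  have jacobian: "(\<Prod>j\<in>Basis. \<bar>scale j\<bar>) = A * B"
    using assms by (auto simp: Basis_prod_def scale_def)
  have [measurable]: "T \<in> borel \<rightarrow>\<^sub>M borel"
    by (simp add: T_def[abs_def])
  have "closed (axis_ellipse_region z A B)"
    unfolding axis_ellipse_region_def using assms by (intro closed_Collect_le continuous_intros) auto
  then have [measurable]: "axis_ellipse_region z A B \<in> sets borel"
    by (simp add: borel_closed)
  have unit_disc: "T -` axis_ellipse_region z A B = cball 0 1"
    using assms by (auto simp: T axis_ellipse_region_def dist_norm norm_prod_def power_divide power_mult_distrib)
  have "emeasure lborel (axis_ellipse_region z A B) = ennreal (A * B) * emeasure lborel (cball (0::real \<times> real) 1)"
    using assms by (subst lborel_T) (simp add: emeasure_density emeasure_distr nn_integral_cmult jacobian unit_disc)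
  also have "\<dots> = ennreal (pi * A * B)"
    using assms by (simp add: emeasure_cball unit_ball_vol_2 ennreal_mult'[symmetric] mult_ac)
  finally show ?thesis
    using assms by (simp add: measure_def)
qed

lemma sin_treble_sin: "sin (3 * x) = 3 * sin x - 4 * sin x ^ 3" for x :: real
proof -
  have "sin (3 * x) = sin (2 * x + x)" by simp
  also have "\<dots> = 2 * sin x * cos x * cos x + (cos x ^ 2 - sin x ^ 2) * sin x"
    unfolding sin_add sin_double cos_double by simp
  also have "\<dots> = 3 * sin x - 4 * sin x ^ 3"
    using sin_cos_squared_add[of x] by algebra
  finally show ?thesis .
qed

lemma cos_240: "cos (4 * pi / 3) = - 1 / 2" and sin_240: "sin (4 * pi / 3) = - sqrt 3 / 2"
proof -
  have "4 * pi / 3 = pi / 3 + pi" by simp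
  then show "cos (4 * pi / 3) = - 1 / 2" "sin (4 * pi / 3) = - sqrt 3 / 2"
    by (simp_all only: cos_periodic_pi sin_periodic_pi cos_60 sin_60)
qed

lemma sum_cos_equally_spaced: "cos x + cos (x - 2 * pi / 3) + cos (x - 4 * pi / 3) = 0"
  and sum_sin_equally_spaced: "sin x + sin (x - 2 * pi / 3) + sin (x - 4 * pi / 3) = 0"
  by (simp_all add: cos_diff sin_diff cos_120 sin_120 cos_240 sin_240)

lemma trig_linear_eq_zero_at_equally_spaced:
  fixes p q r x :: real
  assumes "\<And>k. k \<in> {0, 2 * pi / 3, 4 * pi / 3} \<Longrightarrow> p + q * cos (x - k) + r * sin (x - k) = 0"
  shows "p = 0 \<and> q = 0 \<and> r = 0"
proof -
  have e0: "p + q * cos x + r * sin x = 0"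
    and e1: "p + q * cos (x - 2 * pi / 3) + r * sin (x - 2 * pi / 3) = 0"
    and e2: "p + q * cos (x - 4 * pi / 3) + r * sin (x - 4 * pi / 3) = 0"
    using assms[of 0] assms[of "2 * pi / 3"] assms[of "4 * pi / 3"] by simp_all
  have "3 * p + q * (cos x + cos (x - 2 * pi / 3) + cos (x - 4 * pi / 3))
      + r * (sin x + sin (x - 2 * pi / 3) + sin (x - 4 * pi / 3)) = 0"
    using e0 e1 e2 by (simp add: algebra_simps)
  then have p: "p = 0"
    by (simp add: sum_cos_equally_spaced sum_sin_equally_spaced)
  txt \<open>Cramer's rule for the first two equations, whose determinant is \<open>sin (2\<pi>/3)\<close>.\<close>
  have "q * sin (x - (x - 2 * pi / 3)) = sin x * (q * cos (x - 2 * pi / 3) + r * sin (x - 2 * pi / 3))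
      - sin (x - 2 * pi / 3) * (q * cos x + r * sin x)"
    and "r * sin (x - (x - 2 * pi / 3)) = cos (x - 2 * pi / 3) * (q * cos x + r * sin x)
      - cos x * (q * cos (x - 2 * pi / 3) + r * sin (x - 2 * pi / 3))"
    by (simp_all only: sin_diff[of x "x - 2 * pi / 3"]) (simp_all add: algebra_simps)
  then have "q * sin (2 * pi / 3) = 0" "r * sin (2 * pi / 3) = 0"
    using e0 e1 p by simp_all
  moreover have "sin (2 * pi / 3) \<noteq> 0"
    by (simp add: sin_120)
  ultimately show ?thesis
    using p by simp
qed

lemma quadratic_form_eq_one_at_equally_spaced:
  fixes \<alpha> \<beta> \<gamma> x :: real
  assumes "\<And>k. k \<in> {0, 2 * pi / 3, 4 * pi / 3} \<Longrightarrow>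
    \<alpha> * cos (x - k) ^ 2 + 2 * \<beta> * cos (x - k) * sin (x - k) + \<gamma> * sin (x - k) ^ 2 = 1"
  shows "\<alpha> = 1 \<and> \<beta> = 0 \<and> \<gamma> = 1"
proof -
  define p where "p = (\<alpha> + \<gamma>) / 2 - 1"
  define q where "q = (\<alpha> - \<gamma>) / 2"
  have double_angle: "\<alpha> * cos t ^ 2 + 2 * \<beta> * cos t * sin t + \<gamma> * sin t ^ 2 - 1
      = p + q * cos (2 * t) + \<beta> * sin (2 * t)" for t
    unfolding p_def q_def cos_double sin_double using sin_cos_squared_add[of t] by algebra
  have on_double: "p + q * cos (2 * (x - k)) + \<beta> * sin (2 * (x - k)) = 0"
    if "k \<in> {0, 2 * pi / 3, 4 * pi / 3}" for k
    using assms[OF that] double_angle[of "x - k"] by simp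
  txt \<open>Doubling permutes the three equally spaced angles modulo \<open>2\<pi>\<close>.\<close>
  have "p + q * cos (2 * x - k) + \<beta> * sin (2 * x - k) = 0" if "k \<in> {0, 2 * pi / 3, 4 * pi / 3}" for k
  proof -
    have "2 * x - 4 * pi / 3 = 2 * (x - 2 * pi / 3)"
      and "2 * x - 2 * pi / 3 = 2 * (x - 4 * pi / 3) + 2 * pi" by simp_all
    then show ?thesis
      using that on_double[of 0] on_double[of "2 * pi / 3"] on_double[of "4 * pi / 3"]
      by (auto simp only: cos_periodic sin_periodic) simp_all
  qed
  from trig_linear_eq_zero_at_equally_spaced[OF this] show ?thesis
    unfolding p_def q_def by simp
qed

lemma neg_pedal_at_cusp_parameter:
  fixes a b c u t :: real
  assumes "a \<noteq> 0" "b \<noteq> 0" "c^2 = a^2 - b^2" "cos (3 * t) = cos u" "sin (3 * t) = - sin u"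
  shows "neg_pedal a b c u t
    = center_C2 a b u + (3 * c^2 / (2 * a) * cos t, - (3 * c^2 / (2 * b) * sin t))"
proof -
  have cos_u: "cos u = 4 * cos t ^ 3 - 3 * cos t"
    and sin_u: "sin u = 4 * sin t ^ 3 - 3 * sin t"
    using assms(4,5) by (simp_all add: cos_treble_cos sin_treble_sin)
  have unit: "cos t ^ 2 + sin t ^ 2 = 1" by simp
  have x: "2 * (c^2 * (1 + cos (t + u)) * cos t - a^2 * cos u) = - (a^2 + b^2) * cos u + 3 * c^2 * cos t"
    unfolding cos_add cos_u sin_u assms(3) using unit by algebra
  have y: "2 * (c^2 * cos t * sin (t + u) - c^2 * sin t - a^2 * sin u)
      = - (a^2 + b^2) * sin u - 3 * c^2 * sin t"
    unfolding sin_add cos_u sin_u assms(3) using unit by algebra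
  have "(c^2 * (1 + cos (t + u)) * cos t - a^2 * cos u) / a
      = (- (a^2 + b^2) * cos u + 3 * c^2 * cos t) / (2 * a)"
    by (subst x[symmetric], subst mult_divide_mult_cancel_left) simp_all
  also have "\<dots> = - (a^2 + b^2) / (2 * a) * cos u + 3 * c^2 / (2 * a) * cos t"
    by (simp only: times_divide_eq_left add_divide_distrib diff_divide_distrib)
  moreover have "(c^2 * cos t * sin (t + u) - c^2 * sin t - a^2 * sin u) / b
      = (- (a^2 + b^2) * sin u - 3 * c^2 * sin t) / (2 * b)"
    by (subst y[symmetric], subst mult_divide_mult_cancel_left) simp_all
  moreover have "\<dots> = - (a^2 + b^2) / (2 * b) * sin u - 3 * c^2 / (2 * b) * sin t"
    by (simp only: times_divide_eq_left add_divide_distrib diff_divide_distrib)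
  ultimately show ?thesis
    unfolding neg_pedal_def center_C2_def by simp
qed

lemma cusp_eq:
  fixes a b c u :: real and i :: nat
  assumes "a \<noteq> 0" "b \<noteq> 0" "c^2 = a^2 - b^2"
  defines "t \<equiv> - u / 3 - 2 * pi * (real i - 1) / 3"
  shows "cusp a b c u i = center_C2 a b u + (3 * c^2 / (2 * a) * cos t, - (3 * c^2 / (2 * b) * sin t))"
proof -
  have "3 * t = - (u + 2 * pi * of_int (int i - 1))"
    unfolding t_def by (simp add: field_simps)
  then have "cos (3 * t) = cos u" "sin (3 * t) = - sin u"
    by (simp_all only: cos_minus sin_minus cos_add sin_add cos_int_2pin sin_int_2pin)
  from neg_pedal_at_cusp_parameter[OF assms(1-3) this] show ?thesis
    unfolding cusp_def t_def .
qed

lemma axis_ellipse_as_quadratic_form: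
  "axis_ellipse z A B = {p. (1 / A^2) * (fst p - fst z)^2 + 2 * 0 * (fst p - fst z) * (snd p - snd z)
     + (1 / B^2) * (snd p - snd z)^2 = 1}"
  by (simp add: axis_ellipse_def power_divide)

lemma ellipse_centered_at_axis_ellipse:
  assumes "A \<noteq> 0" "B \<noteq> 0"
  shows "ellipse_centered_at (axis_ellipse z A B) z"
  unfolding ellipse_centered_at_def axis_ellipse_as_quadratic_form
  using assms by (intro exI[of _ "1 / A^2"] exI[of _ 0] exI[of _ "1 / B^2"]) simp

lemma steiner_circumellipse_equally_spaced_iff:
  fixes z :: "real \<times> real" and A B \<theta> :: real
  assumes "A \<noteq> 0" "B \<noteq> 0"
  defines "P k \<equiv> z + (A * cos (\<theta> - k), B * sin (\<theta> - k))"
  shows "steiner_circumellipse (P 0) (P (2 * pi / 3)) (P (4 * pi / 3)) S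
    \<longleftrightarrow> S = axis_ellipse z A B"
proof -
  have "A * cos \<theta> + A * cos (\<theta> - 2 * pi / 3) + A * cos (\<theta> - 4 * pi / 3) = 0"
    and "B * sin \<theta> + B * sin (\<theta> - 2 * pi / 3) + B * sin (\<theta> - 4 * pi / 3) = 0"
    using sum_cos_equally_spaced[of \<theta>] sum_sin_equally_spaced[of \<theta>]
    by (metis distrib_left mult_zero_right)+
  then have "P 0 + P (2 * pi / 3) + P (4 * pi / 3) = 3 *\<^sub>R z"
    by (simp add: P_def prod_eq_iff)
  then have centroid: "centroid3 (P 0) (P (2 * pi / 3)) (P (4 * pi / 3)) = z"
    by (simp add: centroid3_def)
  have on_ellipse: "P k \<in> axis_ellipse z A B" for k
    using assms(1,2) by (simp add: P_def axis_ellipse_def)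
  have unique: "S = axis_ellipse z A B"
    if "ellipse_centered_at S z"
      and vertices: "\<And>k. k \<in> {0, 2 * pi / 3, 4 * pi / 3} \<Longrightarrow> P k \<in> S"
  proof -
    obtain \<alpha> \<beta> \<gamma> where S: "S = {p. \<alpha> * (fst p - fst z)^2 + 2 * \<beta> * (fst p - fst z) * (snd p - snd z)
        + \<gamma> * (snd p - snd z)^2 = 1}"
      using \<open>ellipse_centered_at S z\<close> unfolding ellipse_centered_at_def by blast
    have "(\<alpha> * A^2) * cos (\<theta> - k) ^ 2 + 2 * (\<beta> * A * B) * cos (\<theta> - k) * sin (\<theta> - k)
        + (\<gamma> * B^2) * sin (\<theta> - k) ^ 2 = 1" if "k \<in> {0, 2 * pi / 3, 4 * pi / 3}" for k
      using vertices[OF that] by (simp add: S P_def algebra_simps)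
    then have "\<alpha> * A^2 = 1 \<and> \<beta> * A * B = 0 \<and> \<gamma> * B^2 = 1"
      by (rule quadratic_form_eq_one_at_equally_spaced)
    then have "\<alpha> = 1 / A^2" "\<beta> = 0" "\<gamma> = 1 / B^2"
      using assms(1,2) by (auto simp: field_simps)
    then show ?thesis
      unfolding S axis_ellipse_as_quadratic_form by simp
  qed
  show ?thesis
    unfolding steiner_circumellipse_def centroid
    using unique on_ellipse ellipse_centered_at_axis_ellipse[OF assms(1,2)] by blast
qed

lemma steiner_circumellipse_cusps_iff:
  fixes a b c u :: real
  assumes "a \<noteq> 0" "b \<noteq> 0" "c \<noteq> 0" "c^2 = a^2 - b^2"
  shows "steiner_circumellipse (cusp a b c u 1) (cusp a b c u 2) (cusp a b c u 3) S
    \<longleftrightarrow> S = axis_ellipse (center_C2 a b u) (3 * c^2 / (2 * a)) (3 * c^2 / (2 * b))"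
proof -
  define A B where "A = 3 * c^2 / (2 * a)" and "B = 3 * c^2 / (2 * b)"
  txt \<open>The cusps run clockwise around the ellipse, hence the negated semi-axis \<open>- B\<close>.\<close>
  define P where "P \<theta> = center_C2 a b u + (A * cos (- u / 3 - \<theta>), - B * sin (- u / 3 - \<theta>))" for \<theta>
  have "cusp a b c u 1 = P 0" "cusp a b c u 2 = P (2 * pi / 3)" "cusp a b c u 3 = P (4 * pi / 3)"
    using cusp_eq[OF assms(1,2,4)] by (simp_all add: P_def A_def B_def)
  moreover have "axis_ellipse (center_C2 a b u) A B = axis_ellipse (center_C2 a b u) A (- B)"
    by (simp add: axis_ellipse_def)
  moreover have "steiner_circumellipse (P 0) (P (2 * pi / 3)) (P (4 * pi / 3)) S
      \<longleftrightarrow> S = axis_ellipse (center_C2 a b u) A (- B)"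
    unfolding P_def using assms(1-3)
    by (intro steiner_circumellipse_equally_spaced_iff) (simp_all add: A_def B_def)
  ultimately show ?thesis
    unfolding A_def B_def by simp
qed

lemma dist_square_prod:
  fixes p q :: "real \<times> real"
  shows "(dist p q)^2 = (fst p - fst q)^2 + (snd p - snd q)^2"
  by (simp add: dist_prod_def dist_real_def)

lemma axis_ellipse_dist_center_le:
  assumes "p \<in> axis_ellipse z A B" "A > 0" "B > 0"
  shows "dist p z \<le> max A B"
proof -
  define X Y where "X = fst p - fst z" and "Y = snd p - snd z"
  define M where "M = max A B"
  have "X^2 = A^2 * (X / A)^2" "Y^2 = B^2 * (Y / B)^2"
    using assms(2,3) by (simp_all add: power_divide)
  moreover have "A^2 \<le> M^2" "B^2 \<le> M^2"
    using assms(2,3) by (simp_all add: M_def power_mono)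
  ultimately have "X^2 + Y^2 \<le> M^2 * ((X / A)^2 + (Y / B)^2)"
    unfolding distrib_left by (metis add_mono mult_right_mono zero_le_power2)
  also have "\<dots> = M^2"
    using assms(1) by (simp add: axis_ellipse_def X_def Y_def)
  finally have "(dist p z)^2 \<le> M^2"
    by (simp add: dist_square_prod X_def Y_def)
  then show ?thesis
    using assms(2) by (simp add: M_def power2_le_iff_abs_le)
qed

lemma isometric_axis_ellipses_major_axis_eq:
  fixes f :: "real \<times> real \<Rightarrow> real \<times> real"
  assumes iso: "\<forall>p q. dist (f p) (f q) = dist p q"
    and img: "f ` axis_ellipse (0, 0) a b = axis_ellipse z A B"
    and "0 < b" "b < a" "0 < A" "A < B"
  shows "B = a"
proof -
  have in_E: "(a, 0) \<in> axis_ellipse (0, 0) a b" "(- a, 0) \<in> axis_ellipse (0, 0) a b"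
    using assms(3,4) by (simp_all add: axis_ellipse_def)
  have near_z: "dist q z \<le> B" if "q \<in> axis_ellipse z A B" for q
    using axis_ellipse_dist_center_le[OF that] assms(5,6) by simp
  have maps_into: "f p \<in> axis_ellipse z A B" if "p \<in> axis_ellipse (0, 0) a b" for p
    using img that by blast
  have near_0: "dist p (0, 0) \<le> a" if "p \<in> axis_ellipse (0, 0) a b" for p
    using axis_ellipse_dist_center_le[OF that] assms(3,4) by simp
  have "2 * a = dist (a, 0::real) (- a, 0)"
    using assms(3,4) by (simp add: dist_prod_def dist_real_def real_sqrt_mult)
  also have "\<dots> = dist (f (a, 0)) (f (- a, 0))"
    using iso by metis
  also have "\<dots> \<le> dist (f (a, 0)) z + dist (f (- a, 0)) z"
    by (rule dist_triangle2)
  also have "\<dots> \<le> 2 * B"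
    using near_z[OF maps_into[OF in_E(1)]] near_z[OF maps_into[OF in_E(2)]] by simp
  finally have "a \<le> B" by simp
  have "(fst z, snd z + B) \<in> f ` axis_ellipse (0, 0) a b"
    and "(fst z, snd z - B) \<in> f ` axis_ellipse (0, 0) a b"
    unfolding img using assms(5,6) by (simp_all add: axis_ellipse_def)
  then obtain p q where pq: "p \<in> axis_ellipse (0, 0) a b" "q \<in> axis_ellipse (0, 0) a b"
    and "f p = (fst z, snd z + B)" "f q = (fst z, snd z - B)"
    by (elim imageE) simp
  have "2 * B = dist (f p) (f q)"
    using \<open>f p = _\<close> \<open>f q = _\<close> assms(5,6) by (simp add: dist_prod_def dist_real_def real_sqrt_mult)
  also have "\<dots> = dist p q"
    using iso by metis
  also have "\<dots> \<le> dist p (0, 0) + dist q (0, 0)"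
    by (rule dist_triangle2)
  also have "\<dots> \<le> 2 * a"
    using near_0[OF pq(1)] near_0[OF pq(2)] by simp
  finally show "B = a"
    using \<open>a \<le> B\<close> by simp
qed

lemma axis_ellipse_eq_scaled_rot90:
  fixes w :: "real \<times> real" and k a b :: real
  assumes "k \<noteq> 0"
  shows "axis_ellipse w (k * b) (k * a) = (\<lambda>p. w + k *\<^sub>R p) ` rot90 ` axis_ellipse (0, 0) a b"
proof -
  define h where "h p = w + k *\<^sub>R rot90 p" for p
  define g where "g q = ((snd q - snd w) / k, - (fst q - fst w) / k)" for q
  have "h (g q) = q" for q
    using assms by (simp add: h_def g_def rot90_def prod_eq_iff)
  moreover have "g (h p) = p" for p
    using assms by (simp add: h_def g_def rot90_def prod_eq_iff)
  ultimately have "h ` axis_ellipse (0, 0) a b = {q. g q \<in> axis_ellipse (0, 0) a b}"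
    by (auto simp: image_iff) metis
  also have "\<dots> = axis_ellipse w (k * b) (k * a)"
    by (auto simp: g_def axis_ellipse_def power_divide power_mult_distrib power2_commute[of "fst w"]
        add.commute mult.commute)
  finally show ?thesis
    by (simp add: h_def image_image)
qed

lemma dist_rot90 [simp]: "dist (rot90 p) (rot90 q) = dist p q"
  by (simp add: rot90_def dist_prod_def dist_real_def abs_minus_commute add.commute)

lemma isometric_axis_ellipse_scaled_rot90_iff:
  fixes w :: "real \<times> real" and a b k :: real
  assumes "0 < b" "b < a" "0 < k"
  shows "(\<exists>f :: real \<times> real \<Rightarrow> real \<times> real.
            (\<forall>p q. dist (f p) (f q) = dist p q) \<and> f ` axis_ellipse (0, 0) a b = axis_ellipse w (k * b) (k * a))
         \<longleftrightarrow> k = 1"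
proof
  assume "\<exists>f :: real \<times> real \<Rightarrow> real \<times> real.
    (\<forall>p q. dist (f p) (f q) = dist p q) \<and> f ` axis_ellipse (0, 0) a b = axis_ellipse w (k * b) (k * a)"
  then have "k * a = a"
    using isometric_axis_ellipses_major_axis_eq assms by (metis mult_pos_pos mult_strict_left_mono)
  then show "k = 1"
    using assms by simp
next
  assume "k = 1"
  then have "(\<lambda>p. w + rot90 p) ` axis_ellipse (0, 0) a b = axis_ellipse w (k * b) (k * a)"
    using axis_ellipse_eq_scaled_rot90[of k w b a] by (simp add: image_image)
  moreover have "dist (w + rot90 p) (w + rot90 q) = dist p q" for p q
    by simp
  ultimately show "\<exists>f :: real \<times> real \<Rightarrow> real \<times> real.
    (\<forall>p q. dist (f p) (f q) = dist p q) \<and> f ` axis_ellipse (0, 0) a b = axis_ellipse w (k * b) (k * a)"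
    by (intro exI[of _ "\<lambda>p. w + rot90 p"]) blast
qed

lemma quadratic_ratio_iff:
  fixes a b :: real
  assumes "b < a" "0 < b"
  shows "2 * a * b = 3 * (a^2 - b^2) \<longleftrightarrow> a / b = (1 + sqrt 10) / 3"
proof -
  define r where "r = a / b"
  have "a = r * b" "1 < r"
    using assms by (simp_all add: r_def)
  have "3 * (a^2 - b^2) - 2 * a * b = b^2 * ((3 * r - 1)^2 - 10) / 3"
    unfolding \<open>a = r * b\<close> by (simp add: power2_eq_square algebra_simps)
  then have "2 * a * b = 3 * (a^2 - b^2) \<longleftrightarrow> b^2 * ((3 * r - 1)^2 - 10) = 0"
    by (intro iffI) linarith+
  also have "\<dots> \<longleftrightarrow> (3 * r - 1)^2 = 10"
    using assms(2) by simp
  also have "\<dots> \<longleftrightarrow> 3 * r - 1 = sqrt 10"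
    using \<open>1 < r\<close> by (auto intro: real_sqrt_unique[symmetric])
  also have "\<dots> \<longleftrightarrow> r = (1 + sqrt 10) / 3"
    by auto
  finally show ?thesis
    unfolding r_def .
qed


theorem proposition4p3:
  fixes a b c u :: real
  assumes "a > b" "b > 0" "c > 0" "c^2 = a^2 - b^2"
  defines "E \<equiv> axis_ellipse (0, 0) a b"
    and "E' \<equiv> axis_ellipse (center_C2 a b u) (3 * c^2 / (2 * a)) (3 * c^2 / (2 * b))"
  shows "steiner_circumellipse (cusp a b c u 1) (cusp a b c u 2) (cusp a b c u 3) E'
         \<and> (\<forall>S. steiner_circumellipse (cusp a b c u 1) (cusp a b c u 2) (cusp a b c u 3) S
                 \<longrightarrow> S = E')
         \<and> (\<exists>k w. k > 0 \<and> E' = (\<lambda>p. w + k *\<^sub>R p) ` (rot90 ` E))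
         \<and> measure lborel (axis_ellipse_region (center_C2 a b u) (3 * c^2 / (2 * a)) (3 * c^2 / (2 * b)))
             = 9 * pi * c^4 / (4 * a * b)
         \<and> measure lborel (axis_ellipse_region (center_C2 a b u) (3 * c^2 / (2 * a)) (3 * c^2 / (2 * b)))
             / measure lborel (axis_ellipse_region (0, 0) a b) = 9 * c^4 / (4 * a^2 * b^2)
         \<and> ((\<exists>f :: real \<times> real \<Rightarrow> real \<times> real.
                (\<forall>p q. dist (f p) (f q) = dist p q) \<and> f ` E = E')
             \<longleftrightarrow> a / b = (1 + sqrt 10) / 3)"
proof -
  define k where "k = 3 * c^2 / (2 * a * b)"
  have "a \<noteq> 0" "b \<noteq> 0" "c \<noteq> 0" "0 < k"
    using assms(1-3) by (auto simp: k_def)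
  have semi_axes: "3 * c^2 / (2 * a) = k * b" "3 * c^2 / (2 * b) = k * a"
    using \<open>a \<noteq> 0\<close> \<open>b \<noteq> 0\<close> by (simp_all add: k_def)
  note steiner = steiner_circumellipse_cusps_iff[OF \<open>a \<noteq> 0\<close> \<open>b \<noteq> 0\<close> \<open>c \<noteq> 0\<close> assms(4),
      where u = u, folded E'_def]
  have "E' = (\<lambda>p. center_C2 a b u + k *\<^sub>R p) ` rot90 ` E"
    unfolding E_def E'_def semi_axes using \<open>0 < k\<close> by (intro axis_ellipse_eq_scaled_rot90) simp
  then have similar: "\<exists>k w. k > 0 \<and> E' = (\<lambda>p. w + k *\<^sub>R p) ` rot90 ` E"
    using \<open>0 < k\<close> by blast
  have area: "measure lborel (axis_ellipse_region (center_C2 a b u) (3 * c^2 / (2 * a)) (3 * c^2 / (2 * b)))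
      = 9 * pi * c^4 / (4 * a * b)"
    using measure_axis_ellipse_region assms(1-3) by (simp add: power2_eq_square power4_eq_xxxx)
  have "(\<exists>f :: real \<times> real \<Rightarrow> real \<times> real. (\<forall>p q. dist (f p) (f q) = dist p q) \<and> f ` E = E')
      \<longleftrightarrow> k = 1"
    unfolding E_def E'_def semi_axes using assms(2,1) \<open>0 < k\<close>
    by (rule isometric_axis_ellipse_scaled_rot90_iff)
  also have "\<dots> \<longleftrightarrow> 2 * a * b = 3 * (a^2 - b^2)"
    using \<open>a \<noteq> 0\<close> \<open>b \<noteq> 0\<close> unfolding k_def assms(4)[symmetric] by (auto simp: field_simps)
  also have "\<dots> \<longleftrightarrow> a / b = (1 + sqrt 10) / 3"
    using assms(1,2) by (rule quadratic_ratio_iff)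
  finally show ?thesis
    using steiner similar area measure_axis_ellipse_region[of a b "(0, 0)"] assms(1,2)
    by (simp add: power2_eq_square)
qed

end
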